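(* Let $E=E^\top\in\mathbb{R}^{n\times n}$ be positive definite, let $\alpha>0$, let $c_1,c_2\in\mathbb{R}^n$, and let $\mathcal{E}_\alpha=\{x\in\mathbb{R}^n : x^\top E x\leq\alpha^2\}$. Define $\phi(x)=x^\top Q x$ with $Q=\tfrac12(c_1c_2^\top+c_2c_1^\top)$. Let $W$ be either $(c_1^\top E^{-1}c_1)\,c_2c_2^\top$ or $(c_2^\top E^{-1}c_2)\,c_1c_1^\top$. Then $$\begin{bmatrix} x\\ \phi(x)\end{bmatrix}^\top\begin{bmatrix}\alpha^2 W & 0\\ 0 & -1\end{bmatrix}\begin{bmatrix} x\\ \phi(x)\end{bmatrix}\geq 0\quad\text{for all } x\in\mathcal{E}_\alpha,$$ i.e. $\phi(x)^2\leq \alpha^2 x^\top W x$ for all $x\in\mathcal{E}_\alpha$. *)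

theory Defs
  imports "HOL-Analysis.Analysis"
begin

definition outer :: "real^'n \<Rightarrow> real^'n \<Rightarrow> real^'n^'n" where
  "outer u v = (\<chi> i j. u $ i * v $ j)"

definition qform :: "real^'n^'n \<Rightarrow> real^'n \<Rightarrow> real" where
  "qform A x = x \<bullet> (A *v x)"

definition pos_def :: "real^'n^'n \<Rightarrow> bool" where
  "pos_def E \<longleftrightarrow> transpose E = E \<and> (\<forall>x. x \<noteq> 0 \<longrightarrow> qform E x > 0)"

end

theory Submission
  imports Defs
begin

text \<open>Since \<open>E\<close> is positive definite, \<open>\<langle>u, v\<rangle>\<^sub>E = u\<^sup>T E v\<close> is an inner product, and
  \<open>c\<^sup>T x = \<langle>E\<^sup>-\<^sup>1 c, x\<rangle>\<^sub>E\<close>. Cauchy--Schwarz for \<open>\<langle>-,-\<rangle>\<^sub>E\<close> gives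
  \<open>(c\<^sup>T x)\<^sup>2 \<le> (c\<^sup>T E\<^sup>-\<^sup>1 c) (x\<^sup>T E x) \<le> \<alpha>\<^sup>2 c\<^sup>T E\<^sup>-\<^sup>1 c\<close> on the ellipsoid.
  As \<open>\<phi>(x) = (c\<^sub>1\<^sup>T x)(c\<^sub>2\<^sup>T x)\<close>, bounding one factor this way and keeping the other
  gives \<open>\<phi>(x)\<^sup>2 \<le> \<alpha>\<^sup>2 x\<^sup>T W x\<close> for either choice of \<open>W\<close>.\<close>

lemma outer_mult_vector: "outer u v *v x = (v \<bullet> x) *\<^sub>R u"
  by (simp add: outer_def matrix_vector_mult_def inner_vec_def vec_eq_iff
      sum_distrib_left algebra_simps)

lemma qform_outer: "qform (outer u v) x = (u \<bullet> x) * (v \<bullet> x)"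
  by (simp add: qform_def outer_mult_vector inner_commute)

lemma qform_scaleR: "qform (a *\<^sub>R A) x = a * qform A x"
  unfolding qform_def by (simp flip: scaleR_matrix_vector_assoc)

lemma qform_add: "qform (A + B) x = qform A x + qform B x"
  unfolding qform_def by (simp add: matrix_vector_mult_add_rdistrib inner_add_right)

lemma symmetric_matrix_inner_commute:
  fixes A :: "real^'n^'n"
  assumes "transpose A = A"
  shows "x \<bullet> (A *v y) = y \<bullet> (A *v x)"
  by (metis assms dot_lmul_matrix inner_commute vector_transpose_matrix)

lemma psd_cauchy_schwarz:
  fixes A :: "real^'n^'n"
  assumes sym: "transpose A = A" and psd: "\<And>z. 0 \<le> qform A z"
  shows "(x \<bullet> (A *v y))\<^sup>2 \<le> qform A x * qform A y"
proof -
  define a b d where "a = qform A x" and "b = x \<bullet> (A *v y)" and "d = qform A y"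
  have expand: "0 \<le> s\<^sup>2 * a + 2 * s * t * b + t\<^sup>2 * d" for s t
  proof -
    have "qform A (s *\<^sub>R x + t *\<^sub>R y) = s\<^sup>2 * a + 2 * s * t * b + t\<^sup>2 * d"
      using symmetric_matrix_inner_commute[OF sym, of y x]
      by (simp add: a_def b_def d_def qform_def matrix_vector_right_distrib
          matrix_scaleR_vector_ac flip: scaleR_matrix_vector_assoc)
         (simp add: inner_add_left inner_add_right power2_eq_square algebra_simps)
    then show ?thesis using psd by metis
  qed
  have "d \<ge> 0" using psd by (simp add: d_def)
  then consider "d = 0" | "d > 0" by fastforce
  then have "b\<^sup>2 \<le> a * d"
  proof cases
    case 1
    have "0 \<le> - 4 * b\<^sup>2"
      using expand[of "2 * b" "- (a + 1)"] 1 by (simp add: power2_eq_square algebra_simps)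
    then show ?thesis using 1 by simp
  next
    case 2
    have "0 \<le> d * (a * d - b\<^sup>2)"
      using expand[of d "- b"] by (simp add: power2_eq_square algebra_simps)
    then show ?thesis using 2 by (simp add: zero_le_mult_iff)
  qed
  then show ?thesis by (simp add: a_def b_def d_def)
qed

lemma invertible_matrix_inv_right:
  assumes "invertible A"
  shows "A ** matrix_inv A = mat 1"
  using assms unfolding invertible_def matrix_inv_def by (rule someI2_ex) auto

lemma pos_def_qform_nonneg: "pos_def E \<Longrightarrow> 0 \<le> qform E x"
  unfolding pos_def_def by (cases "x = 0") (auto simp: qform_def less_imp_le)

lemma pos_def_invertible:
  assumes "pos_def E"
  shows "invertible E"
proof -
  have "\<forall>z. E *v z = 0 \<longrightarrow> z = 0"
    using assms unfolding pos_def_def qform_def by fastforce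
  then show ?thesis
    using matrix_left_invertible_ker invertible_left_inverse by blast
qed

lemma pos_def_mult_matrix_inv: "pos_def E \<Longrightarrow> E *v (matrix_inv E *v c) = c"
  by (simp add: matrix_vector_mul_assoc invertible_matrix_inv_right pos_def_invertible)

lemma pos_def_qform_matrix_inv:
  assumes "pos_def E"
  shows "qform (matrix_inv E) c = qform E (matrix_inv E *v c)"
  by (simp add: qform_def pos_def_mult_matrix_inv[OF assms] inner_commute)

lemma pos_def_inner_square_le:
  assumes "pos_def E"
  shows "(c \<bullet> x)\<^sup>2 \<le> qform (matrix_inv E) c * qform E x"
proof -
  define y where "y = matrix_inv E *v c"
  have "c \<bullet> x = x \<bullet> (E *v y)"
    by (simp add: y_def pos_def_mult_matrix_inv[OF assms] inner_commute)
  also have "(x \<bullet> (E *v y))\<^sup>2 \<le> qform E x * qform E y"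
    using assms by (intro psd_cauchy_schwarz) (auto simp: pos_def_def pos_def_qform_nonneg)
  finally show ?thesis
    by (simp add: y_def pos_def_qform_matrix_inv[OF assms] mult.commute)
qed

lemma ellipsoid_product_square_le:
  assumes E: "pos_def E" and x: "qform E x \<le> \<alpha>\<^sup>2"
  shows "((c \<bullet> x) * (d \<bullet> x))\<^sup>2 \<le> \<alpha>\<^sup>2 * qform (qform (matrix_inv E) c *\<^sub>R outer d d) x"
proof -
  have "(c \<bullet> x)\<^sup>2 \<le> qform (matrix_inv E) c * qform E x"
    by (rule pos_def_inner_square_le[OF E])
  also have "\<dots> \<le> qform (matrix_inv E) c * \<alpha>\<^sup>2"
    using E x by (simp add: mult_left_mono pos_def_qform_matrix_inv pos_def_qform_nonneg)
  finally have "(c \<bullet> x)\<^sup>2 \<le> \<alpha>\<^sup>2 * qform (matrix_inv E) c"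
    by (simp add: mult.commute)
  then have "(c \<bullet> x)\<^sup>2 * (d \<bullet> x)\<^sup>2 \<le> \<alpha>\<^sup>2 * qform (matrix_inv E) c * (d \<bullet> x)\<^sup>2"
    by (rule mult_right_mono) simp
  then show ?thesis
    by (simp add: qform_scaleR qform_outer power_mult_distrib power2_eq_square mult_ac)
qed

theorem lemma4:
  fixes E W :: "real^'n^'n" and \<alpha> :: real and c1 c2 :: "real^'n"
  assumes "pos_def E"
    and "\<alpha> > 0"
    and "W = qform (matrix_inv E) c1 *\<^sub>R outer c2 c2
         \<or> W = qform (matrix_inv E) c2 *\<^sub>R outer c1 c1"
  shows "\<forall>x \<in> {x. qform E x \<le> \<alpha>^2}.
           (qform ((1/2) *\<^sub>R (outer c1 c2 + outer c2 c1)) x)^2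
             \<le> \<alpha>^2 * qform W x"
proof
  fix x assume "x \<in> {x. qform E x \<le> \<alpha>^2}"
  then have x: "qform E x \<le> \<alpha>\<^sup>2" by simp
  have "qform ((1/2) *\<^sub>R (outer c1 c2 + outer c2 c1)) x = (c1 \<bullet> x) * (c2 \<bullet> x)"
    by (simp add: qform_scaleR qform_add qform_outer)
  moreover have "((c1 \<bullet> x) * (c2 \<bullet> x))\<^sup>2 \<le> \<alpha>\<^sup>2 * qform W x"
    using assms(3) ellipsoid_product_square_le[OF assms(1) x, of c1 c2]
      ellipsoid_product_square_le[OF assms(1) x, of c2 c1]
    by (auto simp: mult.commute)
  ultimately show "(qform ((1/2) *\<^sub>R (outer c1 c2 + outer c2 c1)) x)^2 \<le> \<alpha>^2 * qform W x"
    by simp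
qed

end
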